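(* Let $\mathcal{K}\subset\mathbb{R}^n$ be a compact convex set and let $\phi:\mathcal{K}\to\mathbb{R}$ be a continuous convex function. Then for every $\varepsilon>0$ there exist a rational number $T>0$ and a function $f_T\in\mathrm{LSE}_T$ with rational parameters such that $$|f_T(\mathbf{x})-\phi(\mathbf{x})|\leqslant\varepsilon\quad\text{for all }\mathbf{x}\in\mathcal{K}.$$ Moreover, $T$ may be chosen of the form $T=1/p$ where $p$ is a positive integer.
   Context: For $T>0$, $\mathrm{LSE}_T$ denotes the class of functions $f_T:\mathbb{R}^n\to\mathbb{R}$ of the form $$f_T(\mathbf{x})=T\log\Big(\sum_{k=1}^K \exp\big(\langle\boldsymbol{\alpha}^{(k)},\mathbf{x}\rangle/T+\beta_k/T\big)\Big)$$ for some positive integer $K$, vectors $\boldsymbol{\alpha}^{(1)},\dots,\boldsymbol{\alpha}^{(K)}\in\mathbb{R}^n$ and real numbers $\beta_1,\dots,\beta_K$. A function $f_T\in\mathrm{LSE}_T$ has rational parameters if $T$ is rational and $f_T$ can be written in this form with all entries of the vectors $\boldsymbol{\alpha}^{(k)}$ and all $\beta_k$ rational. *)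

theory Defs
  imports "HOL-Analysis.Analysis"
begin

definition lse_fun :: "real \<Rightarrow> nat \<Rightarrow> (nat \<Rightarrow> real^'n) \<Rightarrow> (nat \<Rightarrow> real) \<Rightarrow> real^'n \<Rightarrow> real" where
  "lse_fun T K \<alpha> \<beta> x = T * ln (\<Sum>k<K. exp (inner (\<alpha> k) x / T + \<beta> k / T))"

definition LSE :: "real \<Rightarrow> (real^'n \<Rightarrow> real) set" where
  "LSE T = {f. \<exists>K \<alpha> \<beta>. K > 0 \<and> f = lse_fun T K \<alpha> \<beta>}"

definition LSE_rat :: "real \<Rightarrow> (real^'n \<Rightarrow> real) set" where
  "LSE_rat T = {f. T \<in> \<rat> \<and> (\<exists>K \<alpha> \<beta>. K > 0 \<and> (\<forall>k<K. \<forall>i. \<alpha> k $ i \<in> \<rat>)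
      \<and> (\<forall>k<K. \<beta> k \<in> \<rat>) \<and> f = lse_fun T K \<alpha> \<beta>)}"

end

theory Submission
  imports Defs
begin

text \<open>
  By the separating hyperplane theorem applied to the closed convex epigraph, every point of \<open>S\<close>
  carries an affine minorant of \<open>\<phi>\<close> that is nearly tight there; perturbing its coefficients
  to rationals costs little on the bounded set \<open>S\<close>, and compactness leaves finitely many
  such functions \<open>\<alpha>\<^sub>k \<bullet> x + \<beta>\<^sub>k\<close> whose maximum is \<open>\<delta>\<close>-close to \<open>\<phi>\<close>. Finally
  \<open>T log \<Sum>\<^sub>k exp (g\<^sub>k / T)\<close> lies between \<open>max\<^sub>k g\<^sub>k\<close> and \<open>max\<^sub>k g\<^sub>k + T log K\<close>, so
  \<open>T = 1/p\<close> with \<open>p\<close> large enough makes the error at most \<open>2\<delta>\<close>.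
\<close>

lemma closed_epigraph:
  assumes "closed S" "continuous_on S f"
  shows "closed (epigraph S f)"
proof -
  have "continuous_on (S \<times> UNIV) (\<lambda>p. snd p - f (fst p))"
    by (intro continuous_intros continuous_on_compose2[OF assms(2)]) auto
  then have "closed ((S \<times> UNIV) \<inter> (\<lambda>p. snd p - f (fst p)) -` {0..})"
    by (intro continuous_closed_preimage) (auto intro: closed_Times assms(1))
  moreover have "(S \<times> UNIV) \<inter> (\<lambda>p. snd p - f (fst p)) -` {0..} = epigraph S f"
    by (auto simp: epigraph_def)
  ultimately show ?thesis by simp
qed

lemma convex_on_strict_affine_minorant:
  fixes \<phi> :: "'a::euclidean_space \<Rightarrow> real"
  assumes "closed S" "continuous_on S \<phi>" "convex_on S \<phi>" "x0 \<in> S" "t < \<phi> x0"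
  shows "\<exists>a b. (\<forall>x\<in>S. a \<bullet> x + b < \<phi> x) \<and> t < a \<bullet> x0 + b"
proof -
  have "(x0, t) \<notin> epigraph S \<phi>"
    using assms(5) by (simp add: mem_epigraph)
  then obtain w b where w: "w \<bullet> (x0, t) < b" "\<forall>y\<in>epigraph S \<phi>. w \<bullet> y > b"
    using separating_hyperplane_closed_point[OF convex_epigraphI[OF assms(3)]
        closed_epigraph[OF assms(1,2)]] by blast
  obtain u c where uc: "w = (u, c)" by (cases w)
  have above: "u \<bullet> x + c * \<phi> x > b" if "x \<in> S" for x
  proof -
    have "(x, \<phi> x) \<in> epigraph S \<phi>"
      using that by (simp add: mem_epigraph)
    with w(2) show ?thesis by (auto simp: uc mult.commute)
  qed
  \<comment> \<open>The hyperplane is not vertical: it separates two points over the same base point \<open>x0\<close>.\<close>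
  have "c * (\<phi> x0 - t) > 0"
    using above[OF assms(4)] w(1) by (simp add: uc algebra_simps)
  with assms(5) have "c > 0" by (simp add: zero_less_mult_iff)
  show ?thesis
  proof (intro exI conjI ballI)
    show "(- u /\<^sub>R c) \<bullet> x + b / c < \<phi> x" if "x \<in> S" for x
      using above[OF that] \<open>c > 0\<close> by (simp add: field_simps)
    show "t < (- u /\<^sub>R c) \<bullet> x0 + b / c"
      using w(1) \<open>c > 0\<close> by (simp add: uc field_simps)
  qed
qed

lemma vector_rational_approximation:
  fixes a :: "real^'n"
  assumes "e > 0"
  obtains q where "\<And>i. q $ i \<in> \<rat>" "norm (q - a) < e"
proof -
  have "\<forall>i. \<exists>r\<in>\<rat>. \<bar>r - a $ i\<bar> < e / CARD('n)"
    using assms by (metis rational_approximation of_nat_0_less_iff zero_less_card_finite divide_pos_pos)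
  then obtain q where q: "\<And>i. q $ i \<in> \<rat>" "\<And>i. \<bar>q $ i - a $ i\<bar> < e / CARD('n)"
    by (auto simp: lambda_skolem Bex_def)
  have "norm (q - a) \<le> (\<Sum>i\<in>UNIV. \<bar>(q - a) $ i\<bar>)"
    by (rule norm_le_l1_cart)
  also have "\<dots> < (\<Sum>i\<in>(UNIV::'n set). e / CARD('n))"
    using q(2) by (intro sum_strict_mono) auto
  also have "\<dots> = e" by simp
  finally show thesis using q(1) that by blast
qed

lemma affine_rational_approximation:
  fixes a :: "real^'n"
  assumes "bounded S" "e > 0"
  obtains q r where "\<And>i. q $ i \<in> \<rat>" "r \<in> \<rat>"
    "\<And>x. x \<in> S \<Longrightarrow> \<bar>(q \<bullet> x + r) - (a \<bullet> x + b)\<bar> < e"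
proof -
  obtain M where M: "M > 0" "\<And>x. x \<in> S \<Longrightarrow> norm x \<le> M"
    using assms(1) bounded_pos by blast
  obtain q where q: "\<And>i. q $ i \<in> \<rat>" "norm (q - a) < e / (2 * M)"
    using vector_rational_approximation[of "e / (2 * M)" a] M assms(2) by auto
  obtain r where r: "r \<in> \<rat>" "\<bar>r - b\<bar> < e / 2"
    using rational_approximation[of "e / 2" b] assms(2) by auto
  have "\<bar>(q \<bullet> x + r) - (a \<bullet> x + b)\<bar> < e" if "x \<in> S" for x
  proof -
    have "\<bar>(q - a) \<bullet> x\<bar> \<le> norm (q - a) * norm x"
      by (rule Cauchy_Schwarz_ineq2)
    also have "\<dots> \<le> e / (2 * M) * M"
      using q(2) M that assms(2) by (intro mult_mono) auto
    also have "\<dots> = e / 2"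
      using M by simp
    finally have "\<bar>q \<bullet> x - a \<bullet> x\<bar> \<le> e / 2"
      by (simp add: inner_diff_left)
    with r(2) show ?thesis by linarith
  qed
  then show thesis using q(1) r(1) that by blast
qed

lemma convex_on_rational_affine_minorant:
  fixes \<phi> :: "real^'n \<Rightarrow> real"
  assumes "compact S" "continuous_on S \<phi>" "convex_on S \<phi>" "x0 \<in> S" "\<delta> > 0"
  shows "\<exists>a b. (\<forall>i. a $ i \<in> \<rat>) \<and> b \<in> \<rat> \<and> (\<forall>x\<in>S. a \<bullet> x + b \<le> \<phi> x + \<delta>)
    \<and> \<phi> x0 - \<delta> < a \<bullet> x0 + b"
proof -
  obtain a b where ab: "\<forall>x\<in>S. a \<bullet> x + b < \<phi> x" "\<phi> x0 - \<delta> / 2 < a \<bullet> x0 + b"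
    using convex_on_strict_affine_minorant[OF compact_imp_closed[OF assms(1)] assms(2-4),
        of "\<phi> x0 - \<delta> / 2"] assms(5) by auto
  obtain q r where "\<And>i. q $ i \<in> \<rat>" "r \<in> \<rat>"
    and qr: "\<And>x. x \<in> S \<Longrightarrow> \<bar>(q \<bullet> x + r) - (a \<bullet> x + b)\<bar> < \<delta> / 2"
    using affine_rational_approximation[OF compact_imp_bounded[OF assms(1)], of "\<delta> / 2" a b] assms(5)
    by auto
  moreover have "\<forall>x\<in>S. q \<bullet> x + r \<le> \<phi> x + \<delta>"
  proof
    fix x assume "x \<in> S"
    then have "a \<bullet> x + b < \<phi> x"
      using ab(1) by blast
    with qr[OF \<open>x \<in> S\<close>] show "q \<bullet> x + r \<le> \<phi> x + \<delta>"
      by linarith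
  qed
  moreover have "\<phi> x0 - \<delta> < q \<bullet> x0 + r"
    using ab(2) qr[OF assms(4)] by linarith
  ultimately show ?thesis by blast
qed

lemma compact_finite_subfamily_exceeding:
  fixes \<psi> :: "'a::topological_space \<Rightarrow> real" and g :: "'i \<Rightarrow> 'a \<Rightarrow> real"
  assumes "compact S" "continuous_on S \<psi>" "\<And>i. i \<in> I \<Longrightarrow> continuous_on S (g i)"
    and "\<And>x. x \<in> S \<Longrightarrow> \<exists>i\<in>I. \<psi> x < g i x"
  obtains F where "F \<subseteq> I" "finite F" "\<And>x. x \<in> S \<Longrightarrow> \<exists>i\<in>F. \<psi> x < g i x"
proof -
  have "\<exists>V. open V \<and> (\<forall>x\<in>S. x \<in> V \<longleftrightarrow> \<psi> x < g i x)" if "i \<in> I" for i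
  proof -
    have cont: "continuous_on S (\<lambda>x. g i x - \<psi> x)"
      using assms(2,3) that by (intro continuous_intros)
    obtain V where "open V" "V \<inter> S = (\<lambda>x. g i x - \<psi> x) -` {0<..} \<inter> S"
      using continuous_on_open_invariant[THEN iffD1, OF cont, rule_format, OF open_greaterThan] by blast
    then show ?thesis
      by (auto simp: set_eq_iff)
  qed
  then obtain V where V: "\<And>i. i \<in> I \<Longrightarrow> open (V i)"
    "\<And>i x. i \<in> I \<Longrightarrow> x \<in> S \<Longrightarrow> x \<in> V i \<longleftrightarrow> \<psi> x < g i x"
    using bchoice[of I] by (metis (no_types))
  have cover: "S \<subseteq> (\<Union>i\<in>I. V i)"
  proof
    fix x assume "x \<in> S"
    then obtain i where "i \<in> I" "\<psi> x < g i x"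
      using assms(4) by blast
    with V(2) \<open>x \<in> S\<close> show "x \<in> (\<Union>i\<in>I. V i)"
      by blast
  qed
  obtain F where F: "F \<subseteq> I" "finite F" "S \<subseteq> (\<Union>i\<in>F. V i)"
    by (rule compactE_image[OF assms(1) V(1) cover])
  show thesis
  proof (rule that[OF F(1,2)])
    fix x assume "x \<in> S"
    then obtain i where "i \<in> F" "x \<in> V i"
      using F(3) by blast
    with V(2) F(1) \<open>x \<in> S\<close> show "\<exists>i\<in>F. \<psi> x < g i x"
      by blast
  qed
qed

lemma convex_on_rational_affine_sandwich:
  fixes \<phi> :: "real^'n \<Rightarrow> real"
  assumes "compact S" "continuous_on S \<phi>" "convex_on S \<phi>" "\<delta> > 0"
  obtains K \<alpha> \<beta> where "(K::nat) > 0"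
    "\<And>k i. k < K \<Longrightarrow> \<alpha> k $ i \<in> \<rat>" "\<And>k. k < K \<Longrightarrow> \<beta> k \<in> \<rat>"
    "\<And>k x. k < K \<Longrightarrow> x \<in> S \<Longrightarrow> \<alpha> k \<bullet> x + \<beta> k \<le> \<phi> x + \<delta>"
    "\<And>x. x \<in> S \<Longrightarrow> \<exists>k<K. \<phi> x - \<delta> < \<alpha> k \<bullet> x + \<beta> k"
proof -
  define I where "I = {(a, b). (\<forall>i. a $ i \<in> \<rat>) \<and> b \<in> \<rat> \<and> (\<forall>x\<in>S. a \<bullet> x + b \<le> \<phi> x + \<delta>)}"
  define g where "g ab x = fst ab \<bullet> x + snd ab" for ab :: "(real^'n) \<times> real" and x
  have exceeds: "\<exists>ab\<in>I. \<phi> x - \<delta> < g ab x" if "x \<in> S" for x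
    using convex_on_rational_affine_minorant[OF assms(1-3) that assms(4)] by (auto simp: I_def g_def)
  have "continuous_on S (\<lambda>x. \<phi> x - \<delta>)" "\<And>ab. continuous_on S (g ab)"
    using assms(2) by (auto simp: g_def intro!: continuous_intros)
  then obtain F where F: "F \<subseteq> I" "finite F" "\<And>x. x \<in> S \<Longrightarrow> \<exists>ab\<in>F. \<phi> x - \<delta> < g ab x"
    using compact_finite_subfamily_exceeding[OF assms(1), of "\<lambda>x. \<phi> x - \<delta>" I g] exceeds by blast
  obtain ab0 where "ab0 \<in> I"
  proof (cases "S = {}")
    case True
    then have "(0, 0) \<in> I" by (simp add: I_def)
    then show thesis using that by blast
  next
    case False
    then show thesis using exceeds that by blast
  qed
  \<comment> \<open>\<open>ab0\<close> only serves to make the family nonempty when \<open>S = {}\<close>.\<close>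
  obtain abs where abs: "set abs = insert ab0 F"
    using finite_list F(2) by blast
  have in_I: "abs ! k \<in> I" if "k < length abs" for k
    using nth_mem[OF that] abs F(1) \<open>ab0 \<in> I\<close> by auto
  show thesis
  proof (rule that[of "length abs" "\<lambda>k. fst (abs ! k)" "\<lambda>k. snd (abs ! k)"])
    show "length abs > 0"
      using abs by (cases abs) auto
    show "fst (abs ! k) $ i \<in> \<rat>" "snd (abs ! k) \<in> \<rat>" if "k < length abs" for k i
      using in_I[OF that] by (auto simp: I_def)
    show "fst (abs ! k) \<bullet> x + snd (abs ! k) \<le> \<phi> x + \<delta>" if "k < length abs" "x \<in> S" for k x
      using in_I[OF that(1)] that(2) by (auto simp: I_def)
    show "\<exists>k<length abs. \<phi> x - \<delta> < fst (abs ! k) \<bullet> x + snd (abs ! k)" if x: "x \<in> S" for x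
    proof -
      obtain ab where "ab \<in> F" "\<phi> x - \<delta> < g ab x"
        using F(3)[OF x] by blast
      moreover obtain k where "k < length abs" "abs ! k = ab"
        using \<open>ab \<in> F\<close> abs by (metis in_set_conv_nth insertCI)
      ultimately show ?thesis
        by (auto simp: g_def)
    qed
  qed
qed

lemma log_sum_exp_ge:
  fixes g :: "'i \<Rightarrow> real"
  assumes "T > 0" "finite A" "j \<in> A"
  shows "g j \<le> T * ln (\<Sum>k\<in>A. exp (g k / T))"
proof -
  have "exp (g j / T) \<le> (\<Sum>k\<in>A. exp (g k / T))"
    using assms(2,3) by (intro member_le_sum) auto
  then have "g j / T \<le> ln (\<Sum>k\<in>A. exp (g k / T))"
    using assms(2,3) by (subst ln_ge_iff) (auto intro: sum_pos2)
  then show ?thesis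
    using assms(1) by (simp add: field_simps)
qed

lemma log_sum_exp_le:
  fixes g :: "'i \<Rightarrow> real"
  assumes "T > 0" "finite A" "A \<noteq> {}" "\<And>k. k \<in> A \<Longrightarrow> g k \<le> U"
  shows "T * ln (\<Sum>k\<in>A. exp (g k / T)) \<le> U + T * ln (card A)"
proof -
  have "(\<Sum>k\<in>A. exp (g k / T)) \<le> card A * exp (U / T)"
    using assms(1,4) by (intro sum_bounded_above) (simp add: divide_right_mono)
  then have "ln (\<Sum>k\<in>A. exp (g k / T)) \<le> ln (card A * exp (U / T))"
    using assms(2,3) by (intro ln_mono) (auto intro: sum_pos)
  also have "\<dots> = ln (card A) + U / T"
    using assms(2,3) by (simp add: ln_mult card_gt_0_iff)
  finally show ?thesis
    using assms(1) by (simp add: field_simps)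
qed

lemma lse_fun_bounds:
  assumes "T > 0" "j < K" "\<And>k. k < K \<Longrightarrow> \<alpha> k \<bullet> x + \<beta> k \<le> U" "L \<le> \<alpha> j \<bullet> x + \<beta> j"
  shows "L \<le> lse_fun T K \<alpha> \<beta> x" "lse_fun T K \<alpha> \<beta> x \<le> U + T * ln K"
proof -
  have lse: "lse_fun T K \<alpha> \<beta> x = T * ln (\<Sum>k<K. exp ((\<alpha> k \<bullet> x + \<beta> k) / T))"
    by (simp add: lse_fun_def add_divide_distrib)
  show "L \<le> lse_fun T K \<alpha> \<beta> x"
    using log_sum_exp_ge[OF assms(1), of "{..<K}" j "\<lambda>k. \<alpha> k \<bullet> x + \<beta> k"] assms(2,4) by (simp add: lse)
  show "lse_fun T K \<alpha> \<beta> x \<le> U + T * ln K"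
    using log_sum_exp_le[OF assms(1), of "{..<K}" "\<lambda>k. \<alpha> k \<bullet> x + \<beta> k"] assms(2,3) by (auto simp: lse)
qed

theorem corollary1:
  fixes S :: "(real^'n) set" and \<phi> :: "real^'n \<Rightarrow> real" and \<epsilon> :: real
  assumes "compact S" and "convex S"
    and "continuous_on S \<phi>" and "convex_on S \<phi>"
    and "\<epsilon> > 0"
  shows "\<exists>T f. T > 0 \<and> T \<in> \<rat> \<and> (\<exists>p::nat. p > 0 \<and> T = 1 / real p)
           \<and> f \<in> LSE T \<and> f \<in> LSE_rat T \<and> (\<forall>x\<in>S. \<bar>f x - \<phi> x\<bar> \<le> \<epsilon>)"
proof -
  define \<delta> where "\<delta> = \<epsilon> / 2"
  have "\<delta> > 0"
    using assms(5) by (simp add: \<delta>_def)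
  obtain K :: nat and \<alpha> \<beta> where K: "K > 0"
    and rat: "\<And>k i. k < K \<Longrightarrow> \<alpha> k $ i \<in> \<rat>" "\<And>k. k < K \<Longrightarrow> \<beta> k \<in> \<rat>"
    and upper: "\<And>k x. k < K \<Longrightarrow> x \<in> S \<Longrightarrow> \<alpha> k \<bullet> x + \<beta> k \<le> \<phi> x + \<delta>"
    and lower: "\<And>x. x \<in> S \<Longrightarrow> \<exists>k<K. \<phi> x - \<delta> < \<alpha> k \<bullet> x + \<beta> k"
    using convex_on_rational_affine_sandwich[OF assms(1,3,4) \<open>\<delta> > 0\<close>] by blast
  obtain n :: nat where "ln K / \<delta> \<le> n"
    using real_arch_simple by blast
  define p where "p = Suc n"
  define T where "T = 1 / real p"
  have "T > 0" "T \<in> \<rat>"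
    by (simp_all add: T_def p_def)
  have "T * ln K \<le> \<delta>"
    using \<open>ln K / \<delta> \<le> n\<close> \<open>\<delta> > 0\<close> by (simp add: T_def p_def field_simps)
  define f where "f = lse_fun T K \<alpha> \<beta>"
  have "f \<in> LSE T" "f \<in> LSE_rat T"
    using K rat \<open>T \<in> \<rat>\<close> by (auto simp: LSE_def LSE_rat_def f_def)
  moreover have "\<bar>f x - \<phi> x\<bar> \<le> \<epsilon>" if x: "x \<in> S" for x
  proof -
    obtain j where j: "j < K" "\<phi> x - \<delta> < \<alpha> j \<bullet> x + \<beta> j"
      using lower[OF x] by blast
    have "\<phi> x - \<delta> \<le> f x" "f x \<le> \<phi> x + \<delta> + T * ln K"
      using lse_fun_bounds[where \<alpha> = \<alpha> and \<beta> = \<beta> and x = x,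
          OF \<open>T > 0\<close> j(1) upper[OF _ x] less_imp_le[OF j(2)]]
      by (simp_all add: f_def)
    with \<open>T * ln K \<le> \<delta>\<close> show ?thesis
      by (simp add: \<delta>_def abs_le_iff)
  qed
  ultimately show ?thesis
    using \<open>T > 0\<close> \<open>T \<in> \<rat>\<close> T_def p_def by blast
qed

end
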